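(* Let $j\in\{2,3,4,5,6\}$, $\mathbf c\in\mathbf C^j_{\rm aut}$ and $\mathbf m\in\mathbf M_{\mathbf c}$. (1) If $f\in\operatorname{Hom}(H_{\mathbf m},\mathcal Z(H_{\mathbf m}))$ satisfies $\operatorname{Im}(f)\subseteq\operatorname{Ker}(f)$, then the map $g^1_f:H_{\mathbf m}\to H_{\mathbf m}$, $g^1_f(x)=x\cdot f(x)$, is an automorphism of $H_{\mathbf m}$. (2) Let $n>0$, $\bar s\in\mathbb Z^n$, $\bar b\in(L_{\mathbf c})^n$, $\pi\in\operatorname{End}(N_{\mathbf c})$, and let $g\in\mathcal A^{\bar s,\bar b}_{\mathbf m,\pi}$. Then a map $h:H_{\mathbf m}\to H_{\mathbf m}$ belongs to $\mathcal A^{\bar s,\bar b}_{\mathbf m,\pi}$ if and only if there is $f\in\operatorname{Hom}(H_{\mathbf m},\mathcal Z(H_{\mathbf m}))$ with $\mathcal Z(H_{\mathbf m})\subseteq\operatorname{Ker}(f)$ such that $h(x)=g(x)\cdot f(x)$ for all $x\in H_{\mathbf m}$.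
   Context: Groups are not assumed abelian; $\mathcal Z(H)$ is the center of $H$; $J_p$ is the additive group of $p$-adic integers. $\mathbf C^2_{\rm aut}$: tuples $\mathbf c=(L_{\mathbf c},N_{\mathbf c},H_{\mathbf c},h_{\mathbf c},h^*_{\mathbf c},F_{\mathbf c},(Q^{\bar s}_{\mathbf c}))$ with $L_{\mathbf c},H_{\mathbf c}$ groups, $F_{\mathbf c}:L_{\mathbf c}\to\operatorname{Aut}(H_{\mathbf c})$ an injective homomorphism ($F^\ell_{\mathbf c}:=F_{\mathbf c}(\ell)$), $N_{\mathbf c}\trianglelefteq L_{\mathbf c}$, $h_{\mathbf c}:H_{\mathbf c}\to N_{\mathbf c}$ an epimorphism with kernel $\mathcal Z(H_{\mathbf c})$ such that $F_{\mathbf c}(h_{\mathbf c}(a))$ is $x\mapsto axa^{-1}$ for all $a\in H_{\mathbf c}$, $h^*_{\mathbf c}:N_{\mathbf c}\to H_{\mathbf c}$ a map with $h_{\mathbf c}\circ h^*_{\mathbf c}=\mathrm{id}$, and $(b_1,\dots,b_n)\in Q^{\bar s}_{\mathbf c}$ iff $\sum_is_iF^{b_i}_{\mathbf c}\restriction\mathcal Z(H_{\mathbf c})=0$. $\mathbf C^3_{\rm aut}$: add $H^*_{\mathbf c},\mathbb P_{\mathbf c}$ with $\mathcal Z(H_{\mathbf c})$ reduced; $H^*_{\mathbf c}\le H_{\mathbf c}$, $H_{\mathbf c}=\bigcup_{x\in\mathcal Z(H_{\mathbf c})}H^*_{\mathbf c}x$, $\mathcal Z(H^*_{\mathbf c})=\mathcal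 Z(H_{\mathbf c})\cap H^*_{\mathbf c}$; $\mathbb P_{\mathbf c}$ = set of primes $p$ such that $\mathcal Z(H_{\mathbf c})$ has a nonzero element of $p$-power order (then so does $\mathcal Z(H^*_{\mathbf c})$) or $J_p$ embeds in $\mathcal Z(H_{\mathbf c})$ (then $J_p$ embeds in $\mathcal Z(H^*_{\mathbf c})$). $\mathbf C^4_{\rm aut}$: $\mathbf c\in\mathbf C^3_{\rm aut}$ with $\mathcal Z(H_{\mathbf c})/\mathcal Z(H^*_{\mathbf c})$ torsion-free and $p$-divisible for all primes $p\notin\mathbb P_{\mathbf c}$. $\mathbf C^5_{\rm aut}$: pairs $(\mathbf c,\mathbf g)$, $\mathbf c\in\mathbf C^4_{\rm aut}$, $\mathbf g=(\mathbb G_{\mathbf g},(F^\ell_{\mathbf g})_{\ell\in L_{\mathbf c}})$, $\mathbb G_{\mathbf g}$ reduced torsion-free abelian with no $J_p$ embedded, $F^\ell_{\mathbf g}\in\operatorname{Aut}(\mathbb G_{\mathbf g})$, $(b_i)\in Q^{\bar s}_{\mathbf c}\Rightarrow\sum s_iF^{b_i}_{\mathbf g}=0$. $\mathbf C^6_{\rm aut}$: pairs $(\mathbf c,\mathcal G)$, $\mathbf c\in\mathbf C^4_{\rm aut}$, $\mathcal G$ a nonempty set of $\mathbf g$ with $(\mathbf c,\mathbf g)\in\mathbf C^5_{\rm aut}$, closed under restriction to $\mathrm{cl}\{x\}$ (smallest pure subgroup of $\mathbb G_{\mathbf g}$ containing $x$ closed under all $F^\ell_{\mathbf g}$), and containing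 up to isomorphism every such one-generated $\mathbf g$ embeddable compatibly into $(\mathcal Z(H_{\mathbf c}),(F^\ell_{\mathbf c})_\ell)$. For $j\in\{5,6\}$ the members are pairs and $L_{\mathbf c},H_{\mathbf c},\dots$ denote components of the underlying tuple. $\mathbf M_{\mathbf c}$: the class of $\mathbf m\in\mathbf C^j_{\rm aut}$ with $L_{\mathbf m}=L_{\mathbf c}$, $N_{\mathbf m}=N_{\mathbf c}$, $H_{\mathbf c}\subseteq H_{\mathbf m}$, $h_{\mathbf c}\subseteq h_{\mathbf m}$, $h^*_{\mathbf m}=h^*_{\mathbf c}$, $F^\ell_{\mathbf c}\subseteq F^\ell_{\mathbf m}$ for all $\ell$, $Q^{\bar s}_{\mathbf m}=Q^{\bar s}_{\mathbf c}$, $H_{\mathbf m}$ generated by $\mathcal Z(H_{\mathbf m})\cup H_{\mathbf c}$, $\mathcal Z(H_{\mathbf c})=\mathcal Z(H_{\mathbf m})\cap H_{\mathbf c}$; if $j\ge3$ also $\mathbb P_{\mathbf m}=\mathbb P_{\mathbf c}$, $H^*_{\mathbf m}=H^*_{\mathbf c}$; if $j=5$ the same $\mathbf g$; if $j=6$ the same $\mathcal G$. $\mathcal A^{\bar s,\bar b}_{\mathbf m,\pi}$: with $F^{\bar s,\bar b}_{\mathbf m}:=\sum_{i=1}^ns_i(F^{b_i}_{\mathbf m}\restriction\mathcal Z(H_{\mathbf m}))\in\operatorname{End}(\mathcal Z(H_{\mathbf m}))$ and $h'^*:=h^*_{\mathbf c}\circ\pi$, it is the set of all $g\in\operatorname{End}(H_{\mathbf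 m})$ with $g\restriction\mathcal Z(H_{\mathbf m})=F^{\bar s,\bar b}_{\mathbf m}$ and $g(x)\in h'^*(h_{\mathbf m}(x))\cdot\mathcal Z(H_{\mathbf m})$ for all $x\in H_{\mathbf m}$. *)

theory Defs
  imports "HOL-Algebra.Algebra" "HOL-Computational_Algebra.Primes"
begin

definition grp_center :: "('a, 'b) monoid_scheme \<Rightarrow> 'a set" where
  "grp_center G = {z \<in> carrier G. \<forall>x \<in> carrier G. z \<otimes>\<^bsub>G\<^esub> x = x \<otimes>\<^bsub>G\<^esub> z}"

fun zlin :: "('a, 'b) monoid_scheme \<Rightarrow> int list \<Rightarrow> 'a list \<Rightarrow> 'a" where
  "zlin G (s # ss) (y # ys) = (y [^]\<^bsub>G\<^esub> s) \<otimes>\<^bsub>G\<^esub> zlin G ss ys"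
| "zlin G _ _ = \<one>\<^bsub>G\<^esub>"

definition divisible_in :: "('a, 'b) monoid_scheme \<Rightarrow> 'a set \<Rightarrow> bool" where
  "divisible_in G D \<longleftrightarrow> (\<forall>x \<in> D. \<forall>n::nat. n > 0 \<longrightarrow> (\<exists>y \<in> D. y [^]\<^bsub>G\<^esub> n = x))"

definition reduced_in :: "('a, 'b) monoid_scheme \<Rightarrow> 'a set \<Rightarrow> bool" where
  "reduced_in G A \<longleftrightarrow>
     (\<forall>D. subgroup D G \<and> D \<subseteq> A \<and> divisible_in G D \<longrightarrow> D = {\<one>\<^bsub>G\<^esub>})"

text \<open>The additive group J_p of p-adic integers, as the inverse limit of Z/p^k Z.\<close>
definition padic :: "nat \<Rightarrow> (nat \<Rightarrow> int) monoid" where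
  "padic p = \<lparr>carrier = {a. \<forall>k. 0 \<le> a k \<and> a k < int p ^ k \<and> a (Suc k) mod int p ^ k = a k},
              monoid.mult = (\<lambda>a b k. (a k + b k) mod int p ^ k),
              one = (\<lambda>k. 0)\<rparr>"

definition Jp_embeds :: "nat \<Rightarrow> ('a, 'b) monoid_scheme \<Rightarrow> 'a set \<Rightarrow> bool" where
  "Jp_embeds p G A \<longleftrightarrow>
     (\<exists>e. e \<in> hom (padic p) (G\<lparr>carrier := A\<rparr>) \<and> inj_on e (carrier (padic p)))"

definition has_ppow_elem :: "nat \<Rightarrow> ('a, 'b) monoid_scheme \<Rightarrow> 'a set \<Rightarrow> bool" where
  "has_ppow_elem p G A \<longleftrightarrow>
     (\<exists>z \<in> A. z \<noteq> \<one>\<^bsub>G\<^esub> \<and> (\<exists>k::nat. z [^]\<^bsub>G\<^esub> (p ^ k) = \<one>\<^bsub>G\<^esub>))"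

definition pure_sub :: "('a, 'b) monoid_scheme \<Rightarrow> 'a set \<Rightarrow> bool" where
  "pure_sub G S \<longleftrightarrow> subgroup S G \<and>
     (\<forall>n::nat. n > 0 \<longrightarrow> (\<forall>y \<in> S. (\<exists>z \<in> carrier G. z [^]\<^bsub>G\<^esub> n = y)
                                   \<longrightarrow> (\<exists>z \<in> S. z [^]\<^bsub>G\<^esub> n = y)))"

text \<open>Components: L, N, H, h, h^*, F (with F l = F^l), Q (Q s = Q^s), H^*, P.
  The last two are only constrained from class 3 on.\<close>
record ('l, 'h) ctup =
  cL :: "'l monoid"
  cN :: "'l set"
  cH :: "'h monoid"
  ch :: "'h \<Rightarrow> 'l"
  chs :: "'l \<Rightarrow> 'h"
  cF :: "'l \<Rightarrow> 'h \<Rightarrow> 'h"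
  cQ :: "int list \<Rightarrow> 'l list set"
  cHs :: "'h set"
  cP :: "nat set"

abbreviation cZ :: "('l, 'h, 'x) ctup_scheme \<Rightarrow> 'h set" where
  "cZ c \<equiv> grp_center (cH c)"

text \<open>F^{s,b}_c restricted to Z(H_c):  z \<mapsto> sum_i s_i F^{b_i}(z).\<close>
definition Fsb :: "('l, 'h, 'x) ctup_scheme \<Rightarrow> int list \<Rightarrow> 'l list \<Rightarrow> 'h \<Rightarrow> 'h" where
  "Fsb c s b z = zlin (cH c) s (map (\<lambda>l. cF c l z) b)"

definition C2aut :: "('l, 'h) ctup \<Rightarrow> bool" where
  "C2aut c \<longleftrightarrow>
     group (cL c) \<and> group (cH c) \<and>
     (\<forall>l \<in> carrier (cL c). cF c l \<in> iso (cH c) (cH c)) \<and>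
     (\<forall>a \<in> carrier (cL c). \<forall>b \<in> carrier (cL c). \<forall>x \<in> carrier (cH c).
        cF c (a \<otimes>\<^bsub>cL c\<^esub> b) x = cF c a (cF c b x)) \<and>
     (\<forall>a \<in> carrier (cL c). \<forall>b \<in> carrier (cL c).
        (\<forall>x \<in> carrier (cH c). cF c a x = cF c b x) \<longrightarrow> a = b) \<and>
     cN c \<lhd> cL c \<and>
     ch c \<in> hom (cH c) (cL c) \<and> ch c ` carrier (cH c) = cN c \<and>
     kernel (cH c) (cL c) (ch c) = cZ c \<and>
     (\<forall>a \<in> carrier (cH c). \<forall>x \<in> carrier (cH c).
        cF c (ch c a) x = a \<otimes>\<^bsub>cH c\<^esub> x \<otimes>\<^bsub>cH c\<^esub> inv\<^bsub>cH c\<^esub> a) \<and>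
     (\<forall>y \<in> cN c. chs c y \<in> carrier (cH c) \<and> ch c (chs c y) = y) \<and>
     (\<forall>s. s \<noteq> [] \<longrightarrow> cQ c s = {b. length b = length s \<and> set b \<subseteq> carrier (cL c) \<and>
                                  (\<forall>z \<in> cZ c. Fsb c s b z = \<one>\<^bsub>cH c\<^esub>)})"

abbreviation cZs :: "('l, 'h, 'x) ctup_scheme \<Rightarrow> 'h set" where
  "cZs c \<equiv> grp_center ((cH c)\<lparr>carrier := cHs c\<rparr>)"

definition C3aut :: "('l, 'h) ctup \<Rightarrow> bool" where
  "C3aut c \<longleftrightarrow> C2aut c \<and>
     reduced_in (cH c) (cZ c) \<and>
     subgroup (cHs c) (cH c) \<and>
     (\<forall>y \<in> carrier (cH c). \<exists>a \<in> cHs c. \<exists>x \<in> cZ c. y = a \<otimes>\<^bsub>cH c\<^esub> x) \<and>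
     cZs c = cZ c \<inter> cHs c \<and>
     cP c = {p. Factorial_Ring.prime p \<and> (has_ppow_elem p (cH c) (cZ c) \<or> Jp_embeds p (cH c) (cZ c))} \<and>
     (\<forall>p. Factorial_Ring.prime p \<and> has_ppow_elem p (cH c) (cZ c) \<longrightarrow> has_ppow_elem p (cH c) (cZs c)) \<and>
     (\<forall>p. Factorial_Ring.prime p \<and> Jp_embeds p (cH c) (cZ c) \<longrightarrow> Jp_embeds p (cH c) (cZs c))"

text \<open>Z(H)/Z(H^*) torsion-free and p-divisible for primes p not in P, written out elementwise.\<close>
definition C4aut :: "('l, 'h) ctup \<Rightarrow> bool" where
  "C4aut c \<longleftrightarrow> C3aut c \<and>
     (\<forall>z \<in> cZ c. \<forall>n::nat. n > 0 \<and> z [^]\<^bsub>cH c\<^esub> n \<in> cZs c \<longrightarrow> z \<in> cZs c) \<and>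
     (\<forall>p. Factorial_Ring.prime p \<and> p \<notin> cP c \<longrightarrow>
        (\<forall>z \<in> cZ c. \<exists>y \<in> cZ c. z \<otimes>\<^bsub>cH c\<^esub> inv\<^bsub>cH c\<^esub> (y [^]\<^bsub>cH c\<^esub> p) \<in> cZs c))"

record ('l, 'g) gtup =
  gG :: "'g monoid"
  gF :: "'l \<Rightarrow> 'g \<Rightarrow> 'g"

definition C5aut :: "('l, 'h) ctup \<Rightarrow> ('l, 'g) gtup \<Rightarrow> bool" where
  "C5aut c g \<longleftrightarrow> C4aut c \<and>
     comm_group (gG g) \<and> reduced_in (gG g) (carrier (gG g)) \<and>
     (\<forall>x \<in> carrier (gG g). \<forall>n::nat. n > 0 \<and> x [^]\<^bsub>gG g\<^esub> n = \<one>\<^bsub>gG g\<^esub> \<longrightarrow> x = \<one>\<^bsub>gG g\<^esub>) \<and>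
     (\<forall>p. Factorial_Ring.prime p \<longrightarrow> \<not> Jp_embeds p (gG g) (carrier (gG g))) \<and>
     (\<forall>l \<in> carrier (cL c). gF g l \<in> iso (gG g) (gG g)) \<and>
     (\<forall>s b. s \<noteq> [] \<and> b \<in> cQ c s \<longrightarrow>
        (\<forall>x \<in> carrier (gG g). zlin (gG g) s (map (\<lambda>l. gF g l x) b) = \<one>\<^bsub>gG g\<^esub>))"

definition gcl :: "('l, 'h) ctup \<Rightarrow> ('l, 'g) gtup \<Rightarrow> 'g \<Rightarrow> 'g set" where
  "gcl c g x = \<Inter>{S. pure_sub (gG g) S \<and> x \<in> S \<and> (\<forall>l \<in> carrier (cL c). gF g l ` S \<subseteq> S)}"

definition grestr :: "('l, 'g) gtup \<Rightarrow> 'g set \<Rightarrow> ('l, 'g) gtup" where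
  "grestr g S = \<lparr>gG = (gG g)\<lparr>carrier := S\<rparr>, gF = gF g\<rparr>"

text \<open>Equality of g-structures up to values outside the carrier.\<close>
definition gequiv :: "('l, 'h) ctup \<Rightarrow> ('l, 'g) gtup \<Rightarrow> ('l, 'g) gtup \<Rightarrow> bool" where
  "gequiv c g g' \<longleftrightarrow> carrier (gG g) = carrier (gG g') \<and>
     \<one>\<^bsub>gG g\<^esub> = \<one>\<^bsub>gG g'\<^esub> \<and>
     (\<forall>x \<in> carrier (gG g). \<forall>y \<in> carrier (gG g). x \<otimes>\<^bsub>gG g\<^esub> y = x \<otimes>\<^bsub>gG g'\<^esub> y) \<and>
     (\<forall>l \<in> carrier (cL c). \<forall>x \<in> carrier (gG g). gF g l x = gF g' l x)"

definition giso :: "('l, 'h) ctup \<Rightarrow> ('l, 'g1) gtup \<Rightarrow> ('l, 'g2) gtup \<Rightarrow> bool" where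
  "giso c g g' \<longleftrightarrow> (\<exists>e. e \<in> iso (gG g) (gG g') \<and>
     (\<forall>l \<in> carrier (cL c). \<forall>x \<in> carrier (gG g). e (gF g l x) = gF g' l (e x)))"

definition gembeds :: "('l, 'h) ctup \<Rightarrow> ('l, 'g) gtup \<Rightarrow> bool" where
  "gembeds c g \<longleftrightarrow> (\<exists>e. e \<in> hom (gG g) ((cH c)\<lparr>carrier := cZ c\<rparr>) \<and>
     inj_on e (carrier (gG g)) \<and>
     (\<forall>l \<in> carrier (cL c). \<forall>x \<in> carrier (gG g). e (gF g l x) = cF c l (e x)))"

text \<open>Every one-generated embeddable g is isomorphic to one whose carrier lies in the
  carrier type of H_c, so quantifying over g with carrier type 'h covers all of them
  up to isomorphism.\<close>
definition C6aut :: "('l, 'h) ctup \<Rightarrow> ('l, 'g) gtup set \<Rightarrow> bool" where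
  "C6aut c \<G> \<longleftrightarrow> C4aut c \<and> \<G> \<noteq> {} \<and>
     (\<forall>g \<in> \<G>. C5aut c g) \<and>
     (\<forall>g \<in> \<G>. \<forall>x \<in> carrier (gG g). \<exists>g' \<in> \<G>. gequiv c g' (grestr g (gcl c g x))) \<and>
     (\<forall>g :: ('l, 'h) gtup. C5aut c g \<and> (\<exists>x \<in> carrier (gG g). carrier (gG g) = gcl c g x)
         \<and> gembeds c g \<longrightarrow> (\<exists>g' \<in> \<G>. giso c g g'))"

text \<open>For j = 5 the member is the pair (c, g); for j = 6 the pair (c, \<G>); otherwise c.\<close>
definition Caut :: "nat \<Rightarrow> ('l, 'h) ctup \<Rightarrow> ('l, 'g) gtup \<Rightarrow> ('l, 'g) gtup set \<Rightarrow> bool" where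
  "Caut j c g \<G> \<longleftrightarrow> (j = 2 \<and> C2aut c) \<or> (j = 3 \<and> C3aut c) \<or> (j = 4 \<and> C4aut c) \<or>
                       (j = 5 \<and> C5aut c g) \<or> (j = 6 \<and> C6aut c \<G>)"

text \<open>m (with the same g resp. \<G>) belongs to M_c.\<close>
definition inM :: "nat \<Rightarrow> ('l, 'h) ctup \<Rightarrow> ('l, 'g) gtup \<Rightarrow> ('l, 'g) gtup set \<Rightarrow> ('l, 'h) ctup \<Rightarrow> bool" where
  "inM j c g \<G> m \<longleftrightarrow> Caut j m g \<G> \<and>
     cL m = cL c \<and> cN m = cN c \<and>
     carrier (cH c) \<subseteq> carrier (cH m) \<and>
     (\<forall>x \<in> carrier (cH c). \<forall>y \<in> carrier (cH c). x \<otimes>\<^bsub>cH c\<^esub> y = x \<otimes>\<^bsub>cH m\<^esub> y) \<and>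
     (\<forall>x \<in> carrier (cH c). ch m x = ch c x) \<and>
     (\<forall>y \<in> cN c. chs m y = chs c y) \<and>
     (\<forall>l \<in> carrier (cL c). \<forall>x \<in> carrier (cH c). cF m l x = cF c l x) \<and>
     (\<forall>s. s \<noteq> [] \<longrightarrow> cQ m s = cQ c s) \<and>
     generate (cH m) (cZ m \<union> carrier (cH c)) = carrier (cH m) \<and>
     cZ c = cZ m \<inter> carrier (cH c) \<and>
     (j \<ge> 3 \<longrightarrow> cP m = cP c \<and> cHs m = cHs c)"

text \<open>The set A^{s,b}_{m,pi}, with h'^* = h^*_c o pi.\<close>
definition Aset :: "('l, 'h) ctup \<Rightarrow> ('l, 'h) ctup \<Rightarrow> int list \<Rightarrow> 'l list \<Rightarrow> ('l \<Rightarrow> 'l) \<Rightarrow> ('h \<Rightarrow> 'h) set" where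
  "Aset c m s b \<pi> = {g \<in> hom (cH m) (cH m).
      (\<forall>z \<in> cZ m. g z = Fsb m s b z) \<and>
      (\<forall>x \<in> carrier (cH m). g x \<in> (chs c (\<pi> (ch m x))) <#\<^bsub>cH m\<^esub> cZ m)}"

end

theory Submission imports Defs begin

(* If f is a homomorphism into the centre, x \<mapsto> x f(x) is again a homomorphism; when f
   kills its own image, f(x f(x)) = f(x) = f(x f(x)^-1), so x \<mapsto> x f(x)^-1 is its inverse.
   For (2), h agrees with the homomorphism g modulo the centre exactly when f = g^-1 h is
   central-valued; then h is a homomorphism iff f is, and h = g on the centre iff f kills it.
   The coset condition in the definition of A depends only on the coset of g(x) modulo the
   centre, which is the same for all members of A. *)

lemma grp_center_subset_carrier: "grp_center G \<subseteq> carrier G"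
  by (auto simp: grp_center_def)

lemma grp_center_commute:
  "z \<in> grp_center G \<Longrightarrow> x \<in> carrier G \<Longrightarrow> z \<otimes>\<^bsub>G\<^esub> x = x \<otimes>\<^bsub>G\<^esub> z"
  by (auto simp: grp_center_def)

lemma kernel_into_grp_center:
  "kernel G (G\<lparr>carrier := grp_center G\<rparr>) f = {x \<in> carrier G. f x = \<one>\<^bsub>G\<^esub>}"
  by (simp add: kernel_def)

context group
begin

lemma subgroup_grp_center: "subgroup (grp_center G) G"
proof (rule subgroupI)
  show "grp_center G \<subseteq> carrier G" by (rule grp_center_subset_carrier)
  show "grp_center G \<noteq> {}" using grp_center_def by force
next
  fix z assume z: "z \<in> grp_center G"
  then have zc: "z \<in> carrier G" using grp_center_subset_carrier[of G] by blast
  have "inv z \<otimes> x = x \<otimes> inv z" if x: "x \<in> carrier G" for x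
  proof -
    have "inv z \<otimes> x = inv z \<otimes> (x \<otimes> z) \<otimes> inv z" using zc x by (simp add: m_assoc)
    also have "\<dots> = inv z \<otimes> (z \<otimes> x) \<otimes> inv z" using grp_center_commute[OF z x] by simp
    also have "\<dots> = x \<otimes> inv z" using zc x by (simp add: m_assoc[symmetric])
    finally show ?thesis .
  qed
  then show "inv z \<in> grp_center G" using zc by (simp add: grp_center_def)
next
  fix z w assume z: "z \<in> grp_center G" and w: "w \<in> grp_center G"
  then have zc: "z \<in> carrier G" and wc: "w \<in> carrier G"
    using grp_center_subset_carrier[of G] by blast+
  have "z \<otimes> w \<otimes> x = x \<otimes> (z \<otimes> w)" if x: "x \<in> carrier G" for x
    using zc wc x grp_center_commute[OF z x] grp_center_commute[OF w x]
    by (metis m_assoc)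
  then show "z \<otimes> w \<in> grp_center G" using zc wc by (simp add: grp_center_def)
qed

lemma hom_into_grp_center_imp_hom:
  "f \<in> hom G (G\<lparr>carrier := grp_center G\<rparr>) \<Longrightarrow> f \<in> hom G G"
  using grp_center_subset_carrier by (fastforce simp: hom_def)

lemma hom_mult_central_hom:
  assumes g: "g \<in> hom G G" and f: "f \<in> hom G (G\<lparr>carrier := grp_center G\<rparr>)"
  shows "(\<lambda>x. g x \<otimes> f x) \<in> hom G G"
proof (rule homI)
  fix x y assume x: "x \<in> carrier G" and y: "y \<in> carrier G"
  have fZ: "f x \<in> grp_center G" using hom_in_carrier[OF f x] by simp
  have gc: "g x \<in> carrier G" "g y \<in> carrier G" and fc: "f x \<in> carrier G" "f y \<in> carrier G"
    using g hom_into_grp_center_imp_hom[OF f] x y by (auto intro: hom_in_carrier)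
  have "g (x \<otimes> y) \<otimes> f (x \<otimes> y) = g x \<otimes> (g y \<otimes> f x) \<otimes> f y"
    using x y gc fc hom_mult[OF g] hom_mult[OF f] by (simp add: m_assoc)
  also have "\<dots> = g x \<otimes> (f x \<otimes> g y) \<otimes> f y" using grp_center_commute[OF fZ gc(2)] by simp
  also have "\<dots> = (g x \<otimes> f x) \<otimes> (g y \<otimes> f y)" using gc fc by (simp add: m_assoc)
  finally show "g (x \<otimes> y) \<otimes> f (x \<otimes> y) = (g x \<otimes> f x) \<otimes> (g y \<otimes> f y)" .
qed (use g hom_into_grp_center_imp_hom[OF f] in \<open>auto intro: hom_in_carrier\<close>)

lemma inv_mult_hom_into_grp_center:
  assumes g: "g \<in> hom G G" and h: "h \<in> hom G G"
    and central: "\<And>x. x \<in> carrier G \<Longrightarrow> inv (g x) \<otimes> h x \<in> grp_center G"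
  shows "(\<lambda>x. inv (g x) \<otimes> h x) \<in> hom G (G\<lparr>carrier := grp_center G\<rparr>)"
proof (rule homI)
  fix x y assume x: "x \<in> carrier G" and y: "y \<in> carrier G"
  have gc: "g x \<in> carrier G" "g y \<in> carrier G" and hc: "h x \<in> carrier G" "h y \<in> carrier G"
    using g h x y by (auto intro: hom_in_carrier)
  have "inv (g (x \<otimes> y)) \<otimes> h (x \<otimes> y) = inv (g y) \<otimes> (inv (g x) \<otimes> h x) \<otimes> h y"
    using x y gc hc hom_mult[OF g] hom_mult[OF h] by (simp add: inv_mult_group m_assoc)
  also have "\<dots> = (inv (g x) \<otimes> h x) \<otimes> inv (g y) \<otimes> h y"
    using grp_center_commute[OF central[OF x], of "inv (g y)"] gc by simp
  also have "\<dots> = (inv (g x) \<otimes> h x) \<otimes> (inv (g y) \<otimes> h y)" using gc hc by (simp add: m_assoc)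
  finally show "inv (g (x \<otimes> y)) \<otimes> h (x \<otimes> y) =
    (inv (g x) \<otimes> h x) \<otimes>\<^bsub>G\<lparr>carrier := grp_center G\<rparr>\<^esub> (inv (g y) \<otimes> h y)" by simp
qed (use central in auto)

lemma mult_central_hom_iso:
  assumes f: "f \<in> hom G (G\<lparr>carrier := grp_center G\<rparr>)"
    and square_zero: "f ` carrier G \<subseteq> kernel G (G\<lparr>carrier := grp_center G\<rparr>) f"
  shows "(\<lambda>x. x \<otimes> f x) \<in> iso G G"
proof -
  interpret f: group_hom G G f
    using hom_into_grp_center_imp_hom[OF f] by (simp add: group_hom_def group_hom_axioms_def)
  have ff: "f (f x) = \<one>" if "x \<in> carrier G" for x
    using square_zero that by (auto simp: kernel_into_grp_center)
  have "(\<lambda>x. x) \<in> hom G G" by (simp add: hom_def)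
  then have "(\<lambda>x. x \<otimes> f x) \<in> hom G G" by (rule hom_mult_central_hom[OF _ f])
  moreover have "bij_betw (\<lambda>x. x \<otimes> f x) (carrier G) (carrier G)"
  proof (rule bij_betwI[where g = "\<lambda>x. x \<otimes> inv (f x)"])
    show "(\<lambda>x. x \<otimes> f x) \<in> carrier G \<rightarrow> carrier G"
      and "(\<lambda>x. x \<otimes> inv (f x)) \<in> carrier G \<rightarrow> carrier G" by auto
    show "x \<otimes> f x \<otimes> inv (f (x \<otimes> f x)) = x" if "x \<in> carrier G" for x
      using that ff by (simp add: m_assoc)
    show "x \<otimes> inv (f x) \<otimes> f (x \<otimes> inv (f x)) = x" if "x \<in> carrier G" for x
      using that ff by (simp add: m_assoc)
  qed
  ultimately show ?thesis by (simp add: iso_def)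
qed

lemma hom_congruent_mod_center_iff:
  assumes g: "g \<in> hom G G" and h: "h \<in> carrier G \<rightarrow> carrier G"
  shows "(h \<in> hom G G \<and> (\<forall>z \<in> grp_center G. h z = g z) \<and>
          (\<forall>x \<in> carrier G. h x \<in> g x <# grp_center G))
     \<longleftrightarrow> (\<exists>f \<in> hom G (G\<lparr>carrier := grp_center G\<rparr>).
           grp_center G \<subseteq> kernel G (G\<lparr>carrier := grp_center G\<rparr>) f \<and>
           (\<forall>x \<in> carrier G. h x = g x \<otimes> f x))"
proof
  assume "h \<in> hom G G \<and> (\<forall>z \<in> grp_center G. h z = g z) \<and>
          (\<forall>x \<in> carrier G. h x \<in> g x <# grp_center G)"
  then have h_hom: "h \<in> hom G G" and on_center: "\<forall>z \<in> grp_center G. h z = g z"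
    and cosets: "\<forall>x \<in> carrier G. h x \<in> g x <# grp_center G" by blast+
  have central: "inv (g x) \<otimes> h x \<in> grp_center G" if "x \<in> carrier G" for x
    using subgroup.lcos_module_imp[OF subgroup_grp_center is_group hom_in_carrier[OF g that]]
      cosets that by blast
  show "\<exists>f \<in> hom G (G\<lparr>carrier := grp_center G\<rparr>).
           grp_center G \<subseteq> kernel G (G\<lparr>carrier := grp_center G\<rparr>) f \<and>
           (\<forall>x \<in> carrier G. h x = g x \<otimes> f x)"
  proof (intro bexI conjI)
    show "grp_center G \<subseteq> kernel G (G\<lparr>carrier := grp_center G\<rparr>) (\<lambda>x. inv (g x) \<otimes> h x)"
    proof
      fix z assume z: "z \<in> grp_center G"
      then have "z \<in> carrier G" using grp_center_subset_carrier[of G] by blast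
      then show "z \<in> kernel G (G\<lparr>carrier := grp_center G\<rparr>) (\<lambda>x. inv (g x) \<otimes> h x)"
        using on_center z hom_in_carrier[OF g] by (simp add: kernel_into_grp_center)
    qed
    show "\<forall>x \<in> carrier G. h x = g x \<otimes> (inv (g x) \<otimes> h x)"
    proof
      fix x assume "x \<in> carrier G"
      then have "g x \<in> carrier G" "h x \<in> carrier G" using hom_in_carrier[OF g] h by auto
      then show "h x = g x \<otimes> (inv (g x) \<otimes> h x)" by (simp add: m_assoc[symmetric])
    qed
  qed (rule inv_mult_hom_into_grp_center[OF g h_hom central])
next
  assume "\<exists>f \<in> hom G (G\<lparr>carrier := grp_center G\<rparr>).
           grp_center G \<subseteq> kernel G (G\<lparr>carrier := grp_center G\<rparr>) f \<and>
           (\<forall>x \<in> carrier G. h x = g x \<otimes> f x)"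
  then obtain f where f: "f \<in> hom G (G\<lparr>carrier := grp_center G\<rparr>)"
    and kills_center: "grp_center G \<subseteq> kernel G (G\<lparr>carrier := grp_center G\<rparr>) f"
    and h_eq: "\<forall>x \<in> carrier G. h x = g x \<otimes> f x" by blast
  have "h \<in> hom G G"
    using hom_restrict[OF hom_mult_central_hom[OF g f]] h_eq by simp
  moreover have "h z = g z" if z: "z \<in> grp_center G" for z
  proof -
    have "z \<in> carrier G" "f z = \<one>" using kills_center z by (auto simp: kernel_into_grp_center)
    then show ?thesis using h_eq hom_in_carrier[OF g] by simp
  qed
  moreover have "\<forall>x \<in> carrier G. h x \<in> g x <# grp_center G"
    using h_eq hom_in_carrier[OF f] by (auto simp: l_coset_def)
  ultimately show "h \<in> hom G G \<and> (\<forall>z \<in> grp_center G. h z = g z) \<and>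
          (\<forall>x \<in> carrier G. h x \<in> g x <# grp_center G)" by blast
qed

end

lemma Caut_imp_C2aut: "Caut j c g \<G> \<Longrightarrow> C2aut c"
  unfolding Caut_def C6aut_def C5aut_def C4aut_def C3aut_def by blast

lemma mem_Aset_iff:
  assumes c: "C2aut c" and m: "C2aut m" and cm: "inM j c g \<G> m"
    and \<pi>: "\<pi> \<in> hom ((cL c)\<lparr>carrier := cN c\<rparr>) ((cL c)\<lparr>carrier := cN c\<rparr>)"
    and g0: "g0 \<in> Aset c m s b \<pi>"
  shows "h \<in> Aset c m s b \<pi> \<longleftrightarrow>
           h \<in> hom (cH m) (cH m) \<and> (\<forall>z \<in> cZ m. h z = g0 z) \<and>
           (\<forall>x \<in> carrier (cH m). h x \<in> g0 x <#\<^bsub>cH m\<^esub> cZ m)"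
proof -
  interpret H: group "cH m" using m by (simp add: C2aut_def)
  have same_coset: "chs c (\<pi> (ch m x)) <#\<^bsub>cH m\<^esub> cZ m = g0 x <#\<^bsub>cH m\<^esub> cZ m"
    if x: "x \<in> carrier (cH m)" for x
  proof (rule H.l_repr_independence[OF _ _ H.subgroup_grp_center])
    show "g0 x \<in> chs c (\<pi> (ch m x)) <#\<^bsub>cH m\<^esub> cZ m" using g0 x by (simp add: Aset_def)
    have "ch m x \<in> cN c" using m cm x by (auto simp: C2aut_def inM_def)
    then have "chs c (\<pi> (ch m x)) \<in> carrier (cH c)"
      using \<pi> c by (auto simp: C2aut_def hom_def)
    then show "chs c (\<pi> (ch m x)) \<in> carrier (cH m)" using cm by (auto simp: inM_def)
  qed
  show ?thesis using g0 same_coset by (auto simp: Aset_def)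
qed

theorem proposition3p6:
  fixes j :: nat and c m :: "('l, 'h) ctup"
    and g :: "('l, 'g) gtup" and \<G> :: "('l, 'g) gtup set"
  assumes "j \<in> {2, 3, 4, 5, 6}"
    and "Caut j c g \<G>"
    and "inM j c g \<G> m"
  shows "(\<forall>f. f \<in> hom (cH m) ((cH m)\<lparr>carrier := cZ m\<rparr>) \<and>
              f ` carrier (cH m) \<subseteq> kernel (cH m) ((cH m)\<lparr>carrier := cZ m\<rparr>) f \<longrightarrow>
              (\<lambda>x. x \<otimes>\<^bsub>cH m\<^esub> f x) \<in> iso (cH m) (cH m))
       \<and> (\<forall>(n::nat) (s::int list) (b::'l list) (\<pi>::'l \<Rightarrow> 'l) (g0::'h \<Rightarrow> 'h).
            n > 0 \<and> length s = n \<and> length b = n \<and> set b \<subseteq> carrier (cL c) \<and>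
            \<pi> \<in> hom ((cL c)\<lparr>carrier := cN c\<rparr>) ((cL c)\<lparr>carrier := cN c\<rparr>) \<and>
            g0 \<in> Aset c m s b \<pi> \<longrightarrow>
            (\<forall>h. h \<in> carrier (cH m) \<rightarrow> carrier (cH m) \<longrightarrow>
               (h \<in> Aset c m s b \<pi> \<longleftrightarrow>
                (\<exists>f \<in> hom (cH m) ((cH m)\<lparr>carrier := cZ m\<rparr>).
                   cZ m \<subseteq> kernel (cH m) ((cH m)\<lparr>carrier := cZ m\<rparr>) f \<and>
                   (\<forall>x \<in> carrier (cH m). h x = g0 x \<otimes>\<^bsub>cH m\<^esub> f x)))))"
proof -
  have c: "C2aut c" using assms(2) by (rule Caut_imp_C2aut)
  have m: "C2aut m" using assms(3) unfolding inM_def by (blast intro: Caut_imp_C2aut)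
  then interpret H: group "cH m" by (simp add: C2aut_def)
  show ?thesis
  proof (intro conjI allI impI; elim conjE)
    fix f assume "f \<in> hom (cH m) ((cH m)\<lparr>carrier := cZ m\<rparr>)"
      and "f ` carrier (cH m) \<subseteq> kernel (cH m) ((cH m)\<lparr>carrier := cZ m\<rparr>) f"
    then show "(\<lambda>x. x \<otimes>\<^bsub>cH m\<^esub> f x) \<in> iso (cH m) (cH m)"
      by (rule H.mult_central_hom_iso)
  next
    fix n s b \<pi> g0 h
    assume \<pi>: "\<pi> \<in> hom ((cL c)\<lparr>carrier := cN c\<rparr>) ((cL c)\<lparr>carrier := cN c\<rparr>)"
      and g0: "g0 \<in> Aset c m s b \<pi>" and h: "h \<in> carrier (cH m) \<rightarrow> carrier (cH m)"
    have "g0 \<in> hom (cH m) (cH m)" using g0 by (simp add: Aset_def)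
    have "h \<in> Aset c m s b \<pi> \<longleftrightarrow>
           h \<in> hom (cH m) (cH m) \<and> (\<forall>z \<in> cZ m. h z = g0 z) \<and>
           (\<forall>x \<in> carrier (cH m). h x \<in> g0 x <#\<^bsub>cH m\<^esub> cZ m)"
      by (rule mem_Aset_iff[OF c m assms(3) \<pi> g0])
    also have "\<dots> \<longleftrightarrow> (\<exists>f \<in> hom (cH m) ((cH m)\<lparr>carrier := cZ m\<rparr>).
                   cZ m \<subseteq> kernel (cH m) ((cH m)\<lparr>carrier := cZ m\<rparr>) f \<and>
                   (\<forall>x \<in> carrier (cH m). h x = g0 x \<otimes>\<^bsub>cH m\<^esub> f x))"
      by (rule H.hom_congruent_mod_center_iff[OF \<open>g0 \<in> hom (cH m) (cH m)\<close> h])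
    finally show "h \<in> Aset c m s b \<pi> \<longleftrightarrow>
                (\<exists>f \<in> hom (cH m) ((cH m)\<lparr>carrier := cZ m\<rparr>).
                   cZ m \<subseteq> kernel (cH m) ((cH m)\<lparr>carrier := cZ m\<rparr>) f \<and>
                   (\<forall>x \<in> carrier (cH m). h x = g0 x \<otimes>\<^bsub>cH m\<^esub> f x))" .
  qed
qed

end
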